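(* Let $\mathcal E_\infty(\mathbb N)=\{f\in l^\infty(\mathbb N):\mathrm{AE}(f)=+\infty\}$. Then $\mathcal E_\infty(\mathbb N)$ is dense in $l^\infty(\mathbb N)$ in the norm topology.
   Context: $\mathbb N=\{0,1,2,\ldots\}$ and $l^\infty(\mathbb N)$ is the C*-algebra of bounded complex-valued functions on $\mathbb N$ with the sup norm. Let $\sigma_A:l^\infty(\mathbb N)\to l^\infty(\mathbb N)$ be $(\sigma_Af)(n)=f(n+1)$. An anqie is a unital C*-subalgebra $\mathcal A\subseteq l^\infty(\mathbb N)$ with $\sigma_A(\mathcal A)\subseteq\mathcal A$. For $\mathcal F\subseteq l^\infty(\mathbb N)$, $\mathcal A_{\mathcal F}$ denotes the smallest anqie containing $\mathcal F$. For an anqie $\mathcal A$ with maximal ideal space $X$ (weak* topology), the map $A:X\to X$, $(A\rho)(f)=\rho(\sigma_Af)$, is continuous; the anqie entropy $\mathrm{AE}(\mathcal A)\in[0,\infty]$ is the topological entropy $h(A)$, and $\mathrm{AE}(f)=\mathrm{AE}(\mathcal A_{\{f\}})$. *)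

theory Defs
  imports "HOL-Analysis.Analysis" "HOL-Library.Extended_Real"
begin

definition linf :: "(nat \<Rightarrow> complex) set" where
  "linf = {f. bounded (range f)}"

definition linf_norm :: "(nat \<Rightarrow> complex) \<Rightarrow> real" where
  "linf_norm f = (SUP n. cmod (f n))"

definition shiftA :: "(nat \<Rightarrow> complex) \<Rightarrow> (nat \<Rightarrow> complex)" where
  "shiftA f = (\<lambda>n. f (Suc n))"

definition unital_cstar_subalg :: "(nat \<Rightarrow> complex) set \<Rightarrow> bool" where
  "unital_cstar_subalg A \<longleftrightarrow>
     A \<subseteq> linf \<and>
     (\<lambda>_. 1) \<in> A \<and>
     (\<forall>f\<in>A. \<forall>g\<in>A. (\<lambda>n. f n + g n) \<in> A) \<and>
     (\<forall>c. \<forall>f\<in>A. (\<lambda>n. c * f n) \<in> A) \<and>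
     (\<forall>f\<in>A. \<forall>g\<in>A. (\<lambda>n. f n * g n) \<in> A) \<and>
     (\<forall>f\<in>A. (\<lambda>n. cnj (f n)) \<in> A) \<and>
     (\<forall>g\<in>linf. (\<forall>e>0. \<exists>f\<in>A. linf_norm (\<lambda>n. f n - g n) < e) \<longrightarrow> g \<in> A)"

definition anqie :: "(nat \<Rightarrow> complex) set \<Rightarrow> bool" where
  "anqie A \<longleftrightarrow> unital_cstar_subalg A \<and> shiftA ` A \<subseteq> A"

definition anqie_gen :: "(nat \<Rightarrow> complex) set \<Rightarrow> (nat \<Rightarrow> complex) set" where
  "anqie_gen F = \<Inter> {A. anqie A \<and> F \<subseteq> A}"

definition characters :: "(nat \<Rightarrow> complex) set \<Rightarrow> ((nat \<Rightarrow> complex) \<Rightarrow> complex) set" where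
  "characters A = {\<rho> \<in> extensional A.
      (\<forall>f\<in>A. \<forall>g\<in>A. \<rho> (\<lambda>n. f n + g n) = \<rho> f + \<rho> g) \<and>
      (\<forall>c. \<forall>f\<in>A. \<rho> (\<lambda>n. c * f n) = c * \<rho> f) \<and>
      (\<forall>f\<in>A. \<forall>g\<in>A. \<rho> (\<lambda>n. f n * g n) = \<rho> f * \<rho> g) \<and>
      \<rho> (\<lambda>_. 1) = 1}"

text \<open>Weak* topology: pointwise convergence on A, i.e. the subspace topology
of the product topology.\<close>
definition weak_star_top :: "(nat \<Rightarrow> complex) set \<Rightarrow> ((nat \<Rightarrow> complex) \<Rightarrow> complex) topology" where
  "weak_star_top A = subtopology (product_topology (\<lambda>_. euclidean) A) (characters A)"

definition anqie_map :: "(nat \<Rightarrow> complex) set \<Rightarrow> ((nat \<Rightarrow> complex) \<Rightarrow> complex) \<Rightarrow> ((nat \<Rightarrow> complex) \<Rightarrow> complex)" where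
  "anqie_map A \<rho> = restrict (\<lambda>f. \<rho> (shiftA f)) A"

definition open_covers :: "'a topology \<Rightarrow> 'a set set set" where
  "open_covers T = {U. (\<forall>S\<in>U. openin T S) \<and> \<Union>U = topspace T}"

definition cover_num :: "'a topology \<Rightarrow> 'a set set \<Rightarrow> nat" where
  "cover_num T U = Inf {card V | V. V \<subseteq> U \<and> finite V \<and> \<Union>V = topspace T}"

definition join_cover :: "'a topology \<Rightarrow> ('a \<Rightarrow> 'a) \<Rightarrow> 'a set set \<Rightarrow> nat \<Rightarrow> 'a set set" where
  "join_cover T g U n =
     {topspace T \<inter> (\<Inter>i<n. (g ^^ i) -` W i) | W. \<forall>i<n. W i \<in> U}"

definition cover_entropy :: "'a topology \<Rightarrow> ('a \<Rightarrow> 'a) \<Rightarrow> 'a set set \<Rightarrow> ereal" where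
  "cover_entropy T g U =
     limsup (\<lambda>n. ereal (ln (real (cover_num T (join_cover T g U n))) / real n))"

definition top_entropy :: "'a topology \<Rightarrow> ('a \<Rightarrow> 'a) \<Rightarrow> ereal" where
  "top_entropy T g = (SUP U \<in> open_covers T. cover_entropy T g U)"

definition AE_alg :: "(nat \<Rightarrow> complex) set \<Rightarrow> ereal" where
  "AE_alg A = top_entropy (weak_star_top A) (anqie_map A)"

definition AE_fun :: "(nat \<Rightarrow> complex) \<Rightarrow> ereal" where
  "AE_fun f = AE_alg (anqie_gen {f})"

definition E_infty :: "(nat \<Rightarrow> complex) set" where
  "E_infty = {f \<in> linf. AE_fun f = \<infinity>}"

end

theory Submission
  imports Defs
begin

text \<open>Round the real part of f to the grid \<delta>\<int> and add an offset in [0, \<delta>/2] chosen so that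
  cos (2\<pi> Re g n / \<delta>) encodes a sequence u containing every finite word; then g is
  \<delta>-close to f. For each K, a bounded continuous function of \<rho>(g) is an observable on the
  characters of the anqie generated by g which, along the orbits of point evaluations, takes the
  integer values min (u n) K + 1 and hence realises all K^n words of length n. Balls of radius 2/3
  around the integers separate these itineraries, so the n-fold join of the corresponding cover
  needs at least K^n members and the entropy is at least ln K.\<close>

section \<open>Entropy bounds from integer-valued itineraries\<close>

lemma finite_join_cover:
  assumes "finite U"
  shows "finite (join_cover T g U n)"
proof (rule finite_subset)
  show "join_cover T g U n \<subseteq> (\<lambda>W. topspace T \<inter> (\<Inter>i<n. (g ^^ i) -` W i)) ` Pi\<^sub>E {..<n} (\<lambda>_. U)"
  proof
    fix S assume "S \<in> join_cover T g U n"
    then obtain W where S: "S = topspace T \<inter> (\<Inter>i<n. (g ^^ i) -` W i)" and W: "\<forall>i<n. W i \<in> U"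
      unfolding join_cover_def by blast
    have "S = topspace T \<inter> (\<Inter>i<n. (g ^^ i) -` restrict W {..<n} i)"
      unfolding S by auto
    moreover have "restrict W {..<n} \<in> Pi\<^sub>E {..<n} (\<lambda>_. U)"
      using W by auto
    ultimately show "S \<in> (\<lambda>W. topspace T \<inter> (\<Inter>i<n. (g ^^ i) -` W i)) ` Pi\<^sub>E {..<n} (\<lambda>_. U)"
      by blast
  qed
qed (simp add: assms finite_PiE)

lemma Union_join_cover:
  assumes cover: "\<Union>U = topspace T" and g: "g ` topspace T \<subseteq> topspace T"
  shows "\<Union>(join_cover T g U n) = topspace T"
proof
  show "\<Union>(join_cover T g U n) \<subseteq> topspace T"
    unfolding join_cover_def by auto
  show "topspace T \<subseteq> \<Union>(join_cover T g U n)"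
  proof
    fix x assume x: "x \<in> topspace T"
    have "(g ^^ i) x \<in> topspace T" for i
      by (induction i) (use x g in auto)
    then have "\<forall>i. \<exists>S. S \<in> U \<and> (g ^^ i) x \<in> S"
      using cover by blast
    from choice[OF this] obtain W where W: "\<forall>i. W i \<in> U \<and> (g ^^ i) x \<in> W i"
      by blast
    then have "topspace T \<inter> (\<Inter>i<n. (g ^^ i) -` W i) \<in> join_cover T g U n"
      unfolding join_cover_def by blast
    moreover have "x \<in> topspace T \<inter> (\<Inter>i<n. (g ^^ i) -` W i)"
      using x W by auto
    ultimately show "x \<in> \<Union>(join_cover T g U n)"
      by blast
  qed
qed

lemma card_image_le_cover_num:
  assumes "finite J" and "\<Union>J = topspace T" and "P \<subseteq> topspace T"
    and const: "\<And>S x y. S \<in> J \<Longrightarrow> x \<in> S \<inter> P \<Longrightarrow> y \<in> S \<inter> P \<Longrightarrow> h x = h y"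
  shows "card (h ` P) \<le> cover_num T J"
  unfolding cover_num_def
proof (rule cInf_greatest)
  show "{card V |V. V \<subseteq> J \<and> finite V \<and> \<Union>V = topspace T} \<noteq> {}"
    using assms(1,2) by blast
next
  fix c assume "c \<in> {card V |V. V \<subseteq> J \<and> finite V \<and> \<Union>V = topspace T}"
  then obtain V where c: "c = card V" and V: "V \<subseteq> J" "finite V" "\<Union>V = topspace T"
    by blast
  have single: "card (h ` (S \<inter> P)) \<le> 1" if S: "S \<in> V" for S
  proof (cases "S \<inter> P = {}")
    case False
    then obtain x where x: "x \<in> S \<inter> P" by blast
    have "S \<in> J"
      using S V(1) by blast
    then have "h y = h x" if "y \<in> S \<inter> P" for y
      using const x that by metis
    then have "h ` (S \<inter> P) \<subseteq> {h x}"
      by blast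
    then show ?thesis
      using card_mono[of "{h x}" "h ` (S \<inter> P)"] by simp
  qed simp
  have "h ` P = (\<Union>S\<in>V. h ` (S \<inter> P))"
    using V(3) assms(3) by blast
  then have "card (h ` P) \<le> (\<Sum>S\<in>V. card (h ` (S \<inter> P)))"
    using card_UN_le[OF V(2)] by simp
  also have "\<dots> \<le> (\<Sum>S\<in>V. 1)"
    by (rule sum_mono) (rule single)
  finally show "card (h ` P) \<le> c"
    unfolding c by simp
qed

lemma ln_le_cover_entropy:
  assumes K: "K \<ge> 1" and growth: "\<And>n. K ^ n \<le> cover_num T (join_cover T g U n)"
  shows "ereal (ln K) \<le> cover_entropy T g U"
  unfolding cover_entropy_def
proof (rule le_Limsup)
  show "\<forall>\<^sub>F n in sequentially. ereal (ln (real K)) \<le> ereal (ln (real (cover_num T (join_cover T g U n))) / real n)"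
    using eventually_ge_at_top[of 1]
  proof eventually_elim
    case (elim n)
    have "real K ^ n \<le> real (cover_num T (join_cover T g U n))"
      using growth[of n] by (metis of_nat_le_iff of_nat_power)
    then have "ln (real K ^ n) \<le> ln (real (cover_num T (join_cover T g U n)))"
      using K by (intro ln_mono) auto
    then have "real n * ln (real K) \<le> ln (real (cover_num T (join_cover T g U n)))"
      using K by (simp add: ln_realpow)
    then show ?case
      using elim by (simp add: field_simps)
  qed
qed simp

lemma integer_ball_open_cover:
  fixes \<psi> :: "'a \<Rightarrow> real"
  assumes cont: "continuous_map T euclidean \<psi>"
    and bound: "\<And>x. x \<in> topspace T \<Longrightarrow> 0 \<le> \<psi> x \<and> \<psi> x \<le> real N"
  shows "(\<lambda>k. {x \<in> topspace T. \<psi> x \<in> ball (real k) (2/3)}) ` {..N} \<in> open_covers T"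
  unfolding open_covers_def
proof safe
  fix k
  show "openin T {x \<in> topspace T. \<psi> x \<in> ball (real k) (2/3)}"
    by (rule openin_continuous_map_preimage[OF cont]) simp
next
  fix x assume x: "x \<in> topspace T"
  define k where "k = nat (round (\<psi> x))"
  have "0 \<le> round (\<psi> x)" "round (\<psi> x) \<le> int N"
    using bound[OF x] round_mono[of 0 "\<psi> x"] round_mono[of "\<psi> x" "real N"] by auto
  moreover have "\<bar>of_int (round (\<psi> x)) - \<psi> x\<bar> \<le> 1/2"
    by (rule of_int_round_abs_le)
  ultimately have "k \<le> N" "\<psi> x \<in> ball (real k) (2/3)"
    unfolding k_def by (auto simp: dist_real_def)
  then show "x \<in> \<Union>((\<lambda>k. {x \<in> topspace T. \<psi> x \<in> ball (real k) (2/3)}) ` {..N})"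
    using x by auto
qed

lemma Ints_eq_if_dist_less_1:
  fixes x y :: real
  assumes "x \<in> \<int>" "y \<in> \<int>" "dist x y < 1"
  shows "x = y"
  using Ints_nonzero_abs_less1[of "x - y"] assms by (simp add: dist_real_def)

lemma card_integer_itineraries_le_cover_num:
  fixes \<psi> :: "'a \<Rightarrow> real"
  assumes cover: "U \<in> open_covers T" and "finite U"
    and balls: "\<And>W. W \<in> U \<Longrightarrow> \<exists>k::nat. W = {x \<in> topspace T. \<psi> x \<in> ball (real k) (2/3)}"
    and g: "g ` topspace T \<subseteq> topspace T"
    and P: "P \<subseteq> topspace T"
    and integer: "\<And>x i. x \<in> P \<Longrightarrow> \<psi> ((g ^^ i) x) \<in> \<int>"
  shows "card ((\<lambda>x. map (\<lambda>i. \<psi> ((g ^^ i) x)) [0..<n]) ` P) \<le> cover_num T (join_cover T g U n)"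
proof (rule card_image_le_cover_num)
  show "finite (join_cover T g U n)"
    using \<open>finite U\<close> by (rule finite_join_cover)
  show "\<Union>(join_cover T g U n) = topspace T"
    using cover g unfolding open_covers_def by (intro Union_join_cover) auto
  fix S x y assume S: "S \<in> join_cover T g U n" and x: "x \<in> S \<inter> P" and y: "y \<in> S \<inter> P"
  obtain W where S_eq: "S = topspace T \<inter> (\<Inter>i<n. (g ^^ i) -` W i)" and W: "\<forall>i<n. W i \<in> U"
    using S unfolding join_cover_def by blast
  have "\<psi> ((g ^^ i) x) = \<psi> ((g ^^ i) y)" if i: "i < n" for i
  proof -
    obtain k :: nat where "W i = {x \<in> topspace T. \<psi> x \<in> ball (real k) (2/3)}"
      using W i balls by blast
    moreover have "(g ^^ i) x \<in> W i" "(g ^^ i) y \<in> W i"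
      using x y i unfolding S_eq by auto
    ultimately have "dist (\<psi> ((g ^^ i) x)) (real k) < 1" "dist (\<psi> ((g ^^ i) y)) (real k) < 1"
      by (auto simp: dist_commute)
    moreover have "\<psi> ((g ^^ i) x) \<in> \<int>" "\<psi> ((g ^^ i) y) \<in> \<int>"
      using integer x y by auto
    ultimately show ?thesis
      using Ints_eq_if_dist_less_1 Ints_of_nat by metis
  qed
  then show "map (\<lambda>i. \<psi> ((g ^^ i) x)) [0..<n] = map (\<lambda>i. \<psi> ((g ^^ i) y)) [0..<n]"
    by simp
qed (fact P)

lemma ln_le_top_entropy_of_integer_itineraries:
  fixes \<psi> :: "'a \<Rightarrow> real"
  assumes cont: "continuous_map T euclidean \<psi>"
    and bound: "\<And>x. x \<in> topspace T \<Longrightarrow> 0 \<le> \<psi> x \<and> \<psi> x \<le> real N"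
    and g: "g ` topspace T \<subseteq> topspace T"
    and P: "P \<subseteq> topspace T"
    and integer: "\<And>x i. x \<in> P \<Longrightarrow> \<psi> ((g ^^ i) x) \<in> \<int>"
    and K: "K \<ge> 1"
    and growth: "\<And>n. K ^ n \<le> card ((\<lambda>x. map (\<lambda>i. \<psi> ((g ^^ i) x)) [0..<n]) ` P)"
  shows "ereal (ln K) \<le> top_entropy T g"
proof -
  define U where "U = (\<lambda>k. {x \<in> topspace T. \<psi> x \<in> ball (real k) (2/3)}) ` {..N}"
  have U: "U \<in> open_covers T"
    unfolding U_def using cont bound by (rule integer_ball_open_cover)
  have "card ((\<lambda>x. map (\<lambda>i. \<psi> ((g ^^ i) x)) [0..<n]) ` P) \<le> cover_num T (join_cover T g U n)" for n
    by (rule card_integer_itineraries_le_cover_num[where \<psi> = \<psi>, OF U _ _ g P integer]) (auto simp: U_def)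
  then have "K ^ n \<le> cover_num T (join_cover T g U n)" for n
    using growth[of n] order_trans by blast
  then have "ereal (ln K) \<le> cover_entropy T g U"
    by (rule ln_le_cover_entropy[OF K])
  also have "\<dots> \<le> top_entropy T g"
    unfolding top_entropy_def using U by (rule SUP_upper)
  finally show ?thesis .
qed

section \<open>Evaluation functionals on a singly generated anqie\<close>

lemma anqie_gen_closed:
  shows "F \<subseteq> anqie_gen F"
    and "(\<lambda>_. 1) \<in> anqie_gen F"
    and "f \<in> anqie_gen F \<Longrightarrow> h \<in> anqie_gen F \<Longrightarrow> (\<lambda>n. f n + h n) \<in> anqie_gen F"
    and "f \<in> anqie_gen F \<Longrightarrow> (\<lambda>n. c * f n) \<in> anqie_gen F"
    and "f \<in> anqie_gen F \<Longrightarrow> h \<in> anqie_gen F \<Longrightarrow> (\<lambda>n. f n * h n) \<in> anqie_gen F"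
    and "f \<in> anqie_gen F \<Longrightarrow> shiftA f \<in> anqie_gen F"
  unfolding anqie_gen_def anqie_def unital_cstar_subalg_def by blast+

definition point_eval :: "(nat \<Rightarrow> complex) set \<Rightarrow> nat \<Rightarrow> (nat \<Rightarrow> complex) \<Rightarrow> complex" where
  "point_eval A m = restrict (\<lambda>h. h m) A"

lemma point_eval_in_characters: "point_eval (anqie_gen F) m \<in> characters (anqie_gen F)"
  unfolding characters_def point_eval_def using anqie_gen_closed by auto

lemma anqie_map_in_characters:
  assumes "\<rho> \<in> characters (anqie_gen F)"
  shows "anqie_map (anqie_gen F) \<rho> \<in> characters (anqie_gen F)"
proof -
  have "shiftA (\<lambda>n. f n + h n) = (\<lambda>n. shiftA f n + shiftA h n)"
    and "shiftA (\<lambda>n. c * f n) = (\<lambda>n. c * shiftA f n)"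
    and "shiftA (\<lambda>n. f n * h n) = (\<lambda>n. shiftA f n * shiftA h n)"
    and "shiftA (\<lambda>_. 1) = (\<lambda>_. 1)" for f h c
    by (auto simp: shiftA_def)
  with assms anqie_gen_closed(2-6)[where F = F] show ?thesis
    unfolding characters_def anqie_map_def by auto
qed

lemma anqie_map_point_eval:
  "anqie_map (anqie_gen F) (point_eval (anqie_gen F) m) = point_eval (anqie_gen F) (Suc m)"
  unfolding anqie_map_def point_eval_def using anqie_gen_closed(6)[where F = F]
  by (auto simp: shiftA_def fun_eq_iff)

lemma funpow_anqie_map_point_eval:
  "(anqie_map (anqie_gen F) ^^ i) (point_eval (anqie_gen F) m) = point_eval (anqie_gen F) (m + i)"
  by (induction i) (auto simp: anqie_map_point_eval)

lemma topspace_weak_star_top: "topspace (weak_star_top A) = characters A"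
  unfolding weak_star_top_def topspace_subtopology topspace_product_topology_alt
  by (auto simp: characters_def)

lemma continuous_map_weak_star_eval:
  assumes "g \<in> A"
  shows "continuous_map (weak_star_top A) euclidean (\<lambda>\<rho>. \<rho> g)"
proof -
  have "continuous_map (product_topology (\<lambda>_. euclidean) A) euclidean (\<lambda>\<rho>. \<rho> g)"
    using continuous_map_product_projection[OF assms, of "\<lambda>_. euclidean"] by simp
  then show ?thesis
    unfolding weak_star_top_def by (rule continuous_map_from_subtopology)
qed

lemma ln_le_AE_fun:
  fixes g :: "nat \<Rightarrow> complex" and \<phi> :: "complex \<Rightarrow> real"
  assumes cont: "continuous_on UNIV \<phi>"
    and bound: "\<And>z. 0 \<le> \<phi> z \<and> \<phi> z \<le> real N"
    and integer: "\<And>n. \<phi> (g n) \<in> \<int>"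
    and K: "K \<ge> 1"
    and growth: "\<And>n. K ^ n \<le> card (range (\<lambda>m. map (\<lambda>i. \<phi> (g (m + i))) [0..<n]))"
  shows "ereal (ln K) \<le> AE_fun g"
proof -
  define A where "A = anqie_gen {g}"
  have orbit: "(anqie_map A ^^ i) (point_eval A m) g = g (m + i)" for i m
    using anqie_gen_closed(1)[of "{g}"]
    unfolding A_def funpow_anqie_map_point_eval by (simp add: point_eval_def)
  have "ereal (ln K) \<le> top_entropy (weak_star_top A) (anqie_map A)"
  proof (rule ln_le_top_entropy_of_integer_itineraries[where \<psi> = "\<lambda>\<rho>. \<phi> (\<rho> g)" and N = N])
    show "continuous_map (weak_star_top A) euclidean (\<lambda>\<rho>. \<phi> (\<rho> g))"
      using continuous_map_weak_star_eval[of g A] cont anqie_gen_closed(1)[of "{g}"]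
      unfolding A_def by (auto intro: continuous_map_compose[unfolded o_def])
    show "anqie_map A ` topspace (weak_star_top A) \<subseteq> topspace (weak_star_top A)"
      unfolding topspace_weak_star_top A_def using anqie_map_in_characters by blast
    show "range (point_eval A) \<subseteq> topspace (weak_star_top A)"
      unfolding topspace_weak_star_top A_def using point_eval_in_characters by blast
    show "\<phi> ((anqie_map A ^^ i) \<rho> g) \<in> \<int>" if "\<rho> \<in> range (point_eval A)" for \<rho> i
      using that integer orbit by auto
    have "(\<lambda>\<rho>. map (\<lambda>i. \<phi> ((anqie_map A ^^ i) \<rho> g)) [0..<n]) ` range (point_eval A)
        = range (\<lambda>m. map (\<lambda>i. \<phi> (g (m + i))) [0..<n])" for n
      by (auto simp: orbit image_image)
    then show "K ^ n \<le> card ((\<lambda>\<rho>. map (\<lambda>i. \<phi> ((anqie_map A ^^ i) \<rho> g)) [0..<n]) ` range (point_eval A))" for n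
      using growth by simp
  qed (use bound K in auto)
  then show ?thesis
    unfolding AE_fun_def AE_alg_def A_def .
qed

section \<open>A sequence containing every finite word\<close>

lemma card_words_le_card_blocks:
  fixes L :: "nat \<Rightarrow> 'a"
  assumes fin: "finite (range L)" and "finite \<Sigma>"
    and occurs: "\<And>w. set w \<subseteq> \<Sigma> \<Longrightarrow> \<exists>m. \<forall>i<length w. L (m + i) = w ! i"
  shows "card \<Sigma> ^ n \<le> card (range (\<lambda>m. map (\<lambda>i. L (m + i)) [0..<n]))"
proof -
  have "{w. set w \<subseteq> \<Sigma> \<and> length w = n} \<subseteq> range (\<lambda>m. map (\<lambda>i. L (m + i)) [0..<n])"
  proof
    fix w assume w: "w \<in> {w. set w \<subseteq> \<Sigma> \<and> length w = n}"
    then obtain m where "\<forall>i<length w. L (m + i) = w ! i"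
      using occurs by blast
    then have "map (\<lambda>i. L (m + i)) [0..<n] = w"
      using w by (intro nth_equalityI) auto
    then show "w \<in> range (\<lambda>m. map (\<lambda>i. L (m + i)) [0..<n])"
      by blast
  qed
  moreover have "range (\<lambda>m. map (\<lambda>i. L (m + i)) [0..<n]) \<subseteq> {w. set w \<subseteq> range L \<and> length w = n}"
    by auto
  then have "finite (range (\<lambda>m. map (\<lambda>i. L (m + i)) [0..<n]))"
    using finite_lists_length_eq[OF fin] by (rule finite_subset)
  ultimately have "card {w. set w \<subseteq> \<Sigma> \<and> length w = n} \<le> card (range (\<lambda>m. map (\<lambda>i. L (m + i)) [0..<n]))"
    by (rule card_mono[rotated])
  then show ?thesis
    by (simp add: card_lists_length_eq[OF \<open>finite \<Sigma>\<close>])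
qed

text \<open>The concatenation of all finite words (enumerated by from_nat), each followed by a
  separator so that the prefixes grow.\<close>

primrec universal_prefix :: "nat \<Rightarrow> nat list" where
  "universal_prefix 0 = []"
| "universal_prefix (Suc m) = universal_prefix m @ from_nat m @ [0]"

definition universal_seq :: "nat \<Rightarrow> nat" where
  "universal_seq n = universal_prefix (Suc n) ! n"

lemma length_universal_prefix_ge: "m \<le> length (universal_prefix m)"
  by (induction m) auto

lemma universal_prefix_extends: "\<exists>ys. universal_prefix (m + k) = universal_prefix m @ ys"
  by (induction k) auto

lemma universal_seq_eq_nth:
  assumes "n < length (universal_prefix m)"
  shows "universal_seq n = universal_prefix m ! n"
proof -
  define M where "M = max (Suc n) m"
  obtain ys1 where ys1: "universal_prefix M = universal_prefix (Suc n) @ ys1"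
    using universal_prefix_extends[of "Suc n" "M - Suc n"] unfolding M_def by auto
  obtain ys2 where ys2: "universal_prefix M = universal_prefix m @ ys2"
    using universal_prefix_extends[of m "M - m"] unfolding M_def by auto
  have "n < length (universal_prefix (Suc n))"
    using length_universal_prefix_ge[of "Suc n"] by simp
  then have "universal_prefix M ! n = universal_prefix (Suc n) ! n"
    unfolding ys1 by (simp add: nth_append)
  moreover have "universal_prefix M ! n = universal_prefix m ! n"
    using assms unfolding ys2 by (simp add: nth_append)
  ultimately show ?thesis
    unfolding universal_seq_def by simp
qed

lemma universal_seq_contains_word: "\<exists>m. \<forall>i<length w. universal_seq (m + i) = w ! i"
proof (intro exI allI impI)
  define p where "p = universal_prefix (to_nat w)"
  have split: "universal_prefix (Suc (to_nat w)) = p @ w @ [0]"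
    unfolding p_def by simp
  fix i assume i: "i < length w"
  then have "universal_seq (length p + i) = universal_prefix (Suc (to_nat w)) ! (length p + i)"
    by (intro universal_seq_eq_nth) (unfold split, simp)
  also have "\<dots> = w ! i"
    unfolding split using i by (simp add: nth_append)
  finally show "universal_seq (length p + i) = w ! i" .
qed

lemma card_blocks_truncated_universal_seq:
  fixes K :: nat
  shows "K ^ n \<le> card (range (\<lambda>m. map (\<lambda>i. real (min (universal_seq (m + i)) K + 1)) [0..<n]))"
proof -
  define L where "L n = real (min (universal_seq n) K + 1)" for n
  have "card (real ` {1..K}) ^ n \<le> card (range (\<lambda>m. map (\<lambda>i. L (m + i)) [0..<n]))"
  proof (rule card_words_le_card_blocks)
    have "finite (range (\<lambda>n. min (universal_seq n) K + 1))"
      by (rule finite_subset[of _ "{..K + 1}"]) auto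
    then have "finite (real ` range (\<lambda>n. min (universal_seq n) K + 1))"
      by (rule finite_imageI)
    then show "finite (range L)"
      unfolding L_def by (simp only: image_image)
    fix w :: "real list" assume w: "set w \<subseteq> real ` {1..K}"
    obtain m where m: "\<forall>i<length w. universal_seq (m + i) = nat \<lfloor>w ! i\<rfloor> - 1"
      using universal_seq_contains_word[of "map (\<lambda>x. nat \<lfloor>x\<rfloor> - 1) w"] by auto
    have "L (m + i) = w ! i" if "i < length w" for i
    proof -
      have "w ! i \<in> real ` {1..K}"
        using w nth_mem[OF that] by blast
      then obtain k where "w ! i = real k" "1 \<le> k" "k \<le> K"
        by auto
      then show ?thesis
        using m that unfolding L_def by auto
    qed
    then show "\<exists>m. \<forall>i<length w. L (m + i) = w ! i"
      by blast
  qed simp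
  then show ?thesis
    by (simp add: L_def card_image inj_on_def)
qed

section \<open>Encoding the universal sequence into a perturbation\<close>

lemma exists_close_with_phases:
  fixes f :: "nat \<Rightarrow> complex" and \<theta> :: "nat \<Rightarrow> real"
  assumes f: "f \<in> linf" and \<delta>: "\<delta> > 0" and \<theta>: "\<And>n. 0 \<le> \<theta> n \<and> \<theta> n \<le> pi"
  shows "\<exists>g\<in>linf. (\<forall>n. cmod (f n - g n) \<le> \<delta>) \<and> (\<forall>n. cos (2 * pi * Re (g n) / \<delta>) = cos (\<theta> n))"
proof -
  define a where "a n = round (Re (f n) / \<delta>)" for n
  define g where "g n = Complex (\<delta> * a n + \<delta> * \<theta> n / (2 * pi)) (Im (f n))" for n
  have close: "cmod (f n - g n) \<le> \<delta>" for n
  proof -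
    have "cmod (f n - g n) = \<bar>(Re (f n) - \<delta> * a n) - \<delta> * \<theta> n / (2 * pi)\<bar>"
      unfolding g_def by (simp add: cmod_def)
    moreover have "\<bar>Re (f n) - \<delta> * a n\<bar> \<le> \<delta> / 2"
    proof -
      have "\<bar>Re (f n) - \<delta> * a n\<bar> = \<delta> * \<bar>of_int (a n) - Re (f n) / \<delta>\<bar>"
        using \<delta> by (simp add: field_simps abs_mult[symmetric] abs_minus_commute)
      also have "\<dots> \<le> \<delta> * (1/2)"
        unfolding a_def using \<delta> of_int_round_abs_le by (intro mult_left_mono) auto
      finally show ?thesis by simp
    qed
    moreover have "0 \<le> \<delta> * \<theta> n / (2 * pi)" "\<delta> * \<theta> n / (2 * pi) \<le> \<delta> / 2"
      using \<delta> \<theta>[of n] by (auto simp: field_simps)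
    ultimately show ?thesis
      by linarith
  qed
  have "2 * pi * Re (g n) / \<delta> = 2 * pi * of_int (a n) + \<theta> n" for n
    unfolding g_def using \<delta> by (simp add: field_simps)
  then have phase: "cos (2 * pi * Re (g n) / \<delta>) = cos (\<theta> n)" for n
    by (simp add: cos_add cos_int_2pin sin_int_2pin)
  obtain B where B: "\<And>n. cmod (f n) \<le> B"
    using f unfolding linf_def bounded_iff by auto
  have "cmod (g n) \<le> B + \<delta>" for n
    using norm_triangle_ineq4[of "f n" "f n - g n"] close[of n] B[of n] by (simp add: norm_minus_commute)
  then have "g \<in> linf"
    unfolding linf_def bounded_iff by auto
  with close phase show ?thesis
    by blast
qed

text \<open>The observable reads min (universal_seq n) K + 1 off the phase of g n; the cut-off at
  1/(K+1) makes it continuous and bounded on the whole plane.\<close>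

lemma ln_le_AE_fun_if_universal_phases:
  fixes K :: nat
  assumes \<delta>: "\<delta> > 0" and K: "K \<ge> 1"
    and phase: "\<And>n. cos (2 * pi * Re (g n) / \<delta>) = 1 - 1 / (real (universal_seq n) + 1)"
  shows "ereal (ln K) \<le> AE_fun g"
proof -
  define \<phi> where "\<phi> z = 1 / max (1 - cos (2 * pi * Re z / \<delta>)) (1 / (real K + 1))" for z
  define L where "L n = min (universal_seq n) K + 1" for n
  have pos: "0 < max (1 - cos (2 * pi * Re z / \<delta>)) (1 / (real K + 1))" for z
    by (simp add: less_max_iff_disj)
  have \<phi>_g: "\<phi> (g n) = real (L n)" for n
  proof (cases "universal_seq n \<le> K")
    case True
    then have "1 / (real K + 1) \<le> 1 / (real (universal_seq n) + 1)"
      by (simp add: frac_le)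
    then show ?thesis
      unfolding \<phi>_def L_def phase using True by (simp add: max_def)
  next
    case False
    then have "1 / (real (universal_seq n) + 1) \<le> 1 / (real K + 1)"
      by (simp add: frac_le)
    then show ?thesis
      unfolding \<phi>_def L_def phase using False by (simp add: max_def)
  qed
  show ?thesis
  proof (rule ln_le_AE_fun[where \<phi> = \<phi> and N = "K + 1"])
    show "continuous_on UNIV \<phi>"
      unfolding \<phi>_def using pos \<delta> by (intro continuous_intros) (auto simp: less_le)
    show "0 \<le> \<phi> z \<and> \<phi> z \<le> real (K + 1)" for z
    proof -
      have "\<phi> z \<le> 1 / (1 / (real K + 1))"
        unfolding \<phi>_def using pos[of z] by (intro divide_left_mono) auto
      then show ?thesis
        using pos[of z] unfolding \<phi>_def by simp
    qed
    show "\<phi> (g n) \<in> \<int>" for n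
      unfolding \<phi>_g by simp
    show "K ^ n \<le> card (range (\<lambda>m. map (\<lambda>i. \<phi> (g (m + i))) [0..<n]))" for n
      using card_blocks_truncated_universal_seq[of K n] by (simp add: \<phi>_g L_def)
  qed (rule K)
qed

lemma AE_fun_eq_PInf_if_universal_phases:
  assumes "\<delta> > 0"
    and "\<And>n. cos (2 * pi * Re (g n) / \<delta>) = 1 - 1 / (real (universal_seq n) + 1)"
  shows "AE_fun g = \<infinity>"
proof (rule ereal_top)
  fix B :: real
  define K where "K = nat \<lceil>exp B\<rceil>"
  have "exp B \<le> real K"
    unfolding K_def by linarith
  moreover have "0 < real K"
    using exp_gt_zero[of B] \<open>exp B \<le> real K\<close> by linarith
  ultimately have "K \<ge> 1" and "B \<le> ln K"
    by (auto simp: ln_ge_iff)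
  then show "ereal B \<le> AE_fun g"
    using ln_le_AE_fun_if_universal_phases[OF assms(1) \<open>K \<ge> 1\<close> assms(2)]
    by (meson ereal_less_eq(3) order_trans)
qed

lemma linf_norm_le:
  assumes "\<And>n. cmod (h n) \<le> c"
  shows "linf_norm h \<le> c"
  unfolding linf_norm_def by (rule cSUP_least) (use assms in auto)

theorem theorem1p3:
  shows "\<forall>f\<in>linf. \<forall>e>0. \<exists>g\<in>E_infty. linf_norm (\<lambda>n. f n - g n) < e"
proof (intro ballI allI impI)
  fix f :: "nat \<Rightarrow> complex" and e :: real
  assume f: "f \<in> linf" and e: "e > 0"
  define \<theta> where "\<theta> n = arccos (1 - 1 / (real (universal_seq n) + 1))" for n
  have bounds: "-1 \<le> 1 - 1 / (real (universal_seq n) + 1) \<and> 1 - 1 / (real (universal_seq n) + 1) \<le> 1" for n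
    by (auto simp: field_simps)
  then have "0 \<le> \<theta> n \<and> \<theta> n \<le> pi" for n
    unfolding \<theta>_def by (simp add: arccos_lbound arccos_ubound)
  then obtain g where g: "g \<in> linf" and close: "\<And>n. cmod (f n - g n) \<le> e / 2"
      and phase: "\<And>n. cos (2 * pi * Re (g n) / (e / 2)) = cos (\<theta> n)"
    using exists_close_with_phases[OF f, of "e / 2" \<theta>] e by auto
  have "AE_fun g = \<infinity>"
    using e phase bounds by (intro AE_fun_eq_PInf_if_universal_phases[of "e / 2"]) (auto simp: \<theta>_def)
  moreover have "linf_norm (\<lambda>n. f n - g n) \<le> e / 2"
    using close by (rule linf_norm_le)
  ultimately show "\<exists>g\<in>E_infty. linf_norm (\<lambda>n. f n - g n) < e"
    using g e unfolding E_infty_def by force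
qed

end
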